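(* Let $G$ be a $6$-regular graph, $\mathcal S$ a canonical path partition of $G$, $P$ a path component, and $X=x_1x_2\cdots x_k$ ($k\ge 2$) a sequence of consecutive vertices of $P$, all belonging to $V_2^b$. Let $X'\subseteq X$ be the set of vertices of $X$ that go to at least one vertex of a cycle component. If $|X'|\ge 2$, then the vertices of $X'$ are consecutive on $P$, there is a single cycle component $C$ such that every cycle-component vertex that any vertex of $X'$ goes to lies in $C$, and, if $|V(C)|\le 6$, the number of balanced edges between $X'$ and $V(C)$ is at most $\frac{|X'|\cdot|V(C)|}{2}$.
   Context: All graphs are finite, simple and undirected. A path partition of $G=(V,E)$ is a set of vertex-disjoint paths (single vertices allowed) covering $V$; its members are components. A component with $t\ge3$ vertices is a cycle component if the subgraph induced on its vertex set has a spanning cycle; a one-vertex component is an isolated vertex; every other component is a path component. A path partition is canonical if (1) it has the minimum number of components among all path partitions of $G$; (2) among those, it has the maximum number of cycle components; (3) it has no isolated vertices. Given a canonical path partition $\mathcal S$ of $G$: two vertices are path neighbors if they are consecutive on a path component. An edge of $G$ is a free edge unless it joins two path neighbors or has both endpoints in the same cycle component. $V_1$ is the set of end-vertices of path components together with all vertices of cycle components. $V_2$ is the set of vertices not in $V_1$ that are joined by a free edge to a vertex of $V_1$. $V_2^b$ is the set of vertices of $V_2$ having at least one path neighbor in $V_2$. A balanced edge is a free edge with one endpoint in $V_1$ and the other in $V_2$; for $x\in V_2$, $y\in V_1$ we say $x$ goes to $y$ if $xy$ is a balanced edge. *)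

theory Defs
  imports Main
begin

definition simple_graph :: "'a set \<Rightarrow> ('a \<Rightarrow> 'a \<Rightarrow> bool) \<Rightarrow> bool" where
  "simple_graph V adj \<longleftrightarrow> finite V \<and> (\<forall>u v. adj u v \<longrightarrow> adj v u) \<and> (\<forall>u. \<not> adj u u)
     \<and> (\<forall>u v. adj u v \<longrightarrow> u \<in> V \<and> v \<in> V)"

definition degree :: "'a set \<Rightarrow> ('a \<Rightarrow> 'a \<Rightarrow> bool) \<Rightarrow> 'a \<Rightarrow> nat" where
  "degree V adj v = card {u \<in> V. adj v u}"

definition regular :: "nat \<Rightarrow> 'a set \<Rightarrow> ('a \<Rightarrow> 'a \<Rightarrow> bool) \<Rightarrow> bool" where
  "regular d V adj \<longleftrightarrow> (\<forall>v\<in>V. degree V adj v = d)"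

definition is_path :: "('a \<Rightarrow> 'a \<Rightarrow> bool) \<Rightarrow> 'a list \<Rightarrow> bool" where
  "is_path adj p \<longleftrightarrow> p \<noteq> [] \<and> distinct p \<and> (\<forall>i. Suc i < length p \<longrightarrow> adj (p!i) (p!Suc i))"

definition path_partition :: "'a set \<Rightarrow> ('a \<Rightarrow> 'a \<Rightarrow> bool) \<Rightarrow> 'a list set \<Rightarrow> bool" where
  "path_partition V adj S \<longleftrightarrow> (\<forall>p\<in>S. is_path adj p)
     \<and> (\<forall>p\<in>S. \<forall>q\<in>S. p \<noteq> q \<longrightarrow> set p \<inter> set q = {})
     \<and> \<Union>(set ` S) = V"

definition has_spanning_cycle :: "('a \<Rightarrow> 'a \<Rightarrow> bool) \<Rightarrow> 'a set \<Rightarrow> bool" where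
  "has_spanning_cycle adj U \<longleftrightarrow> (\<exists>c. distinct c \<and> set c = U \<and> length c \<ge> 3
     \<and> (\<forall>i. Suc i < length c \<longrightarrow> adj (c!i) (c!Suc i)) \<and> adj (last c) (hd c))"

definition cycle_comp :: "('a \<Rightarrow> 'a \<Rightarrow> bool) \<Rightarrow> 'a list \<Rightarrow> bool" where
  "cycle_comp adj p \<longleftrightarrow> length p \<ge> 3 \<and> has_spanning_cycle adj (set p)"

definition path_comp :: "('a \<Rightarrow> 'a \<Rightarrow> bool) \<Rightarrow> 'a list \<Rightarrow> bool" where
  "path_comp adj p \<longleftrightarrow> length p \<ge> 2 \<and> \<not> cycle_comp adj p"

definition cycle_comps :: "('a \<Rightarrow> 'a \<Rightarrow> bool) \<Rightarrow> 'a list set \<Rightarrow> 'a list set" where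
  "cycle_comps adj S = {p \<in> S. cycle_comp adj p}"

definition canonical :: "'a set \<Rightarrow> ('a \<Rightarrow> 'a \<Rightarrow> bool) \<Rightarrow> 'a list set \<Rightarrow> bool" where
  "canonical V adj S \<longleftrightarrow> path_partition V adj S
     \<and> (\<forall>S'. path_partition V adj S' \<longrightarrow> card S \<le> card S')
     \<and> (\<forall>S'. path_partition V adj S' \<and> card S' = card S \<longrightarrow>
              card (cycle_comps adj S') \<le> card (cycle_comps adj S))
     \<and> (\<forall>p\<in>S. length p \<noteq> 1)"

definition path_neighbors :: "('a \<Rightarrow> 'a \<Rightarrow> bool) \<Rightarrow> 'a list set \<Rightarrow> 'a \<Rightarrow> 'a \<Rightarrow> bool" where
  "path_neighbors adj S u v \<longleftrightarrow> (\<exists>p\<in>S. path_comp adj p \<and>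
     (\<exists>i. Suc i < length p \<and> ((u = p!i \<and> v = p!Suc i) \<or> (v = p!i \<and> u = p!Suc i))))"

definition free_edge :: "('a \<Rightarrow> 'a \<Rightarrow> bool) \<Rightarrow> 'a list set \<Rightarrow> 'a \<Rightarrow> 'a \<Rightarrow> bool" where
  "free_edge adj S u v \<longleftrightarrow> adj u v \<and> \<not> path_neighbors adj S u v
     \<and> \<not> (\<exists>C\<in>S. cycle_comp adj C \<and> u \<in> set C \<and> v \<in> set C)"

definition V1 :: "('a \<Rightarrow> 'a \<Rightarrow> bool) \<Rightarrow> 'a list set \<Rightarrow> 'a set" where
  "V1 adj S = {v. \<exists>p\<in>S. (path_comp adj p \<and> (v = hd p \<or> v = last p))
                        \<or> (cycle_comp adj p \<and> v \<in> set p)}"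

definition V2 :: "'a set \<Rightarrow> ('a \<Rightarrow> 'a \<Rightarrow> bool) \<Rightarrow> 'a list set \<Rightarrow> 'a set" where
  "V2 V adj S = {v \<in> V. v \<notin> V1 adj S \<and> (\<exists>u\<in>V1 adj S. free_edge adj S v u)}"

definition V2b :: "'a set \<Rightarrow> ('a \<Rightarrow> 'a \<Rightarrow> bool) \<Rightarrow> 'a list set \<Rightarrow> 'a set" where
  "V2b V adj S = {v \<in> V2 V adj S. \<exists>u\<in>V2 V adj S. path_neighbors adj S v u}"

text \<open>x goes to y: x in V2, y in V1, xy a balanced (free) edge.\<close>
definition goes_to :: "'a set \<Rightarrow> ('a \<Rightarrow> 'a \<Rightarrow> bool) \<Rightarrow> 'a list set \<Rightarrow> 'a \<Rightarrow> 'a \<Rightarrow> bool" where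
  "goes_to V adj S x y \<longleftrightarrow> x \<in> V2 V adj S \<and> y \<in> V1 adj S \<and> free_edge adj S x y"

end

theory Submission
  imports Defs
begin

text \<open>A canonical partition admits no rerouting that covers the vertices of some of its components
  by fewer paths. Rerouting at an edge \<open>p p'\<close> of the path component \<open>P\<close> shows that \<open>p\<close> and \<open>p'\<close>
  cannot see two different cycle components, nor a vertex of a cycle and its successor, nor a cycle
  and an end of another path component, nor a cycle and the near end of \<open>P\<close>. Consequently a vertex
  of \<open>X - X'\<close> next to \<open>X'\<close> sees the far end of \<open>P\<close>; a gap in \<open>X'\<close> would give two such crossing
  chords, which together with the cycles seen from both sides of the gap merge everything into one
  path. So \<open>X'\<close> is a segment of \<open>P\<close>, all cycles it sees coincide with one cycle \<open>C\<close>, and the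
  neighbourhoods in \<open>C\<close> of consecutive vertices of \<open>X'\<close> are separated by the rotation \<open>f\<close> of \<open>C\<close>.
  When \<open>C\<close> has at most 6 vertices, \<open>f\<^sup>2\<close> has no fixed points, nor has \<open>f\<^sup>4\<close> unless \<open>C\<close> has
  fewer than 5 vertices, and a counting argument along the segment gives the bound.\<close>

section \<open>Paths and segments of lists\<close>

lemma is_path_iff_successively:
  "is_path adj p \<longleftrightarrow> p \<noteq> [] \<and> distinct p \<and> successively adj p"
  unfolding is_path_def successively_conv_nth by blast

lemma is_path_appendI:
  assumes "is_path adj xs" "is_path adj ys" "set xs \<inter> set ys = {}" "adj (last xs) (hd ys)"
  shows "is_path adj (xs @ ys)"
  using assms by (auto simp: is_path_iff_successively successively_append_iff)

lemma is_path_appendD: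
  assumes "is_path adj (xs @ ys)"
  shows "xs \<noteq> [] \<Longrightarrow> is_path adj xs" and "ys \<noteq> [] \<Longrightarrow> is_path adj ys"
  using assms by (auto simp: is_path_iff_successively successively_append_iff)

lemma is_path_rev:
  assumes "symp adj"
  shows "is_path adj (rev p) \<longleftrightarrow> is_path adj p"
proof -
  have flip: "(\<lambda>x y. adj y x) = adj" using assms by (auto dest: sympD)
  show ?thesis
    unfolding is_path_iff_successively successively_rev flip by simp
qed

lemma is_path_split_at:
  assumes "is_path adj (L @ p # p' # R)"
  shows "is_path adj (L @ [p])" "is_path adj (p' # R)"
  using is_path_appendD[of adj "L @ [p]" "p' # R"] assms by simp_all

lemma take_nth_nth_drop:
  "Suc i < length xs \<Longrightarrow> xs = take i xs @ xs ! i # xs ! Suc i # drop (Suc (Suc i)) xs"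
  by (metis Cons_nth_drop_Suc Suc_lessD id_take_nth_drop)

lemma take_nth_segment_nth_drop:
  assumes "i < j" "j < length xs"
  defines "B \<equiv> take (j - Suc i) (drop (Suc i) xs)"
  shows "xs = take i xs @ xs ! i # B @ xs ! j # drop (Suc j) xs"
proof -
  have "drop (Suc i) xs = B @ drop j xs"
    unfolding B_def using assms(1) by (metis append_take_drop_id drop_drop Suc_leI le_add_diff_inverse2)
  then show ?thesis
    using id_take_nth_drop[of i xs] Cons_nth_drop_Suc[of j xs] assms(1,2) by simp
qed

lemma segment_hd_last:
  assumes "Suc i < j" "j < length xs"
  defines "B \<equiv> take (j - Suc i) (drop (Suc i) xs)"
  shows "B \<noteq> []" "hd B = xs ! Suc i" "last B = xs ! (j - 1)"
proof -
  have len: "length B = j - Suc i" unfolding B_def using assms(1,2) by simp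
  then show "B \<noteq> []" using assms(1) by auto
  show "hd B = xs ! Suc i" unfolding B_def using assms(1,2) by (simp add: hd_conv_nth)
  have "last B = B ! (j - Suc i - 1)" using len assms(1) by (subst last_conv_nth) auto
  moreover have "Suc i + (j - Suc i - 1) = j - 1" using assms(1) by linarith
  ultimately show "last B = xs ! (j - 1)" using assms(1,2) by (simp add: B_def)
qed

lemma nth_in_segment_iff:
  assumes "xs = pre @ ys @ suf" "distinct xs" "i < length xs"
  shows "xs ! i \<in> set ys \<longleftrightarrow> length pre \<le> i \<and> i < length pre + length ys"
proof
  assume "xs ! i \<in> set ys"
  then obtain t where t: "t < length ys" "ys ! t = xs ! i" by (metis in_set_conv_nth)
  then have "xs ! (length pre + t) = xs ! i" using assms(1) by (simp add: nth_append)
  moreover have "length pre + t < length xs" using assms(1) t by simp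
  ultimately have "length pre + t = i" using assms(2,3) nth_eq_iff_index_eq by blast
  then show "length pre \<le> i \<and> i < length pre + length ys" using t by simp
next
  assume "length pre \<le> i \<and> i < length pre + length ys"
  then show "xs ! i \<in> set ys" using assms(1) by (auto simp: nth_append)
qed

lemma consecutive_in_segment:
  assumes "xs = pre @ ys @ suf" "Suc t < length ys"
  shows "xs = (pre @ take t ys) @ ys ! t # ys ! Suc t # (drop (Suc (Suc t)) ys @ suf)"
  using assms take_nth_nth_drop[OF assms(2)] by (metis append.assoc append_Cons)

lemma segment_of_between_closed:
  assumes "distinct xs" "K \<subseteq> set xs" "K \<noteq> {}"
    and closed: "\<And>i l j. i < l \<Longrightarrow> l < j \<Longrightarrow> j < length xs \<Longrightarrow> xs ! i \<in> K \<Longrightarrow> xs ! j \<in> K \<Longrightarrow> xs ! l \<in> K"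
  obtains pre ys suf where "xs = pre @ ys @ suf" "set ys = K" "distinct ys"
proof -
  define I where "I = {t. t < length xs \<and> xs ! t \<in> K}"
  have "finite I" unfolding I_def by auto
  obtain x where "x \<in> K" using assms(3) by blast
  then obtain k where "k < length xs" "xs ! k = x" using assms(2) by (metis in_set_conv_nth subsetD)
  then have "I \<noteq> {}" using \<open>x \<in> K\<close> unfolding I_def by blast
  define i where "i = Min I"
  define j where "j = Max I"
  have ij: "i \<in> I" "j \<in> I"
    using Min_in Max_in \<open>finite I\<close> \<open>I \<noteq> {}\<close> unfolding i_def j_def by blast+
  have bounds: "i \<le> t" "t \<le> j" if "t \<in> I" for t
    using that \<open>finite I\<close> unfolding i_def j_def by simp_all
  have "i \<le> j" "j < length xs" using bounds ij unfolding I_def by auto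
  define ys where "ys = take (Suc j - i) (drop i xs)"
  have len: "length ys = Suc j - i" unfolding ys_def using \<open>i \<le> j\<close> \<open>j < length xs\<close> by simp
  have nth: "ys ! t = xs ! (i + t)" if "t < length ys" for t
    using that len \<open>j < length xs\<close> unfolding ys_def by simp
  have "drop i xs = ys @ drop (Suc j) xs"
    unfolding ys_def using \<open>i \<le> j\<close> by (metis append_take_drop_id drop_drop Suc_diff_le le_SucI le_add_diff_inverse2)
  then have "xs = take i xs @ ys @ drop (Suc j) xs" using append_take_drop_id[of i xs] by simp
  moreover have "set ys = K"
  proof
    show "set ys \<subseteq> K"
    proof
      fix y assume "y \<in> set ys"
      then obtain t where t: "t < length ys" "y = xs ! (i + t)" using nth by (auto simp: in_set_conv_nth)
      then consider "t = 0" | "i + t = j" | "i < i + t" "i + t < j" using len by linarith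
      then show "y \<in> K"
        by cases (use t ij closed[of i "i + t" j] \<open>j < length xs\<close> in \<open>auto simp: I_def\<close>)
    qed
    show "K \<subseteq> set ys"
    proof
      fix y assume "y \<in> K"
      then obtain k where k: "k < length xs" "xs ! k = y" using assms(2) by (metis in_set_conv_nth subsetD)
      then have "k \<in> I" using \<open>y \<in> K\<close> unfolding I_def by blast
      then have "k - i < length ys" "ys ! (k - i) = y" using bounds[of k] len nth k by auto
      then show "y \<in> set ys" using nth_mem by fastforce
    qed
  qed
  moreover have "distinct ys" unfolding ys_def using assms(1) by simp
  ultimately show ?thesis using that by blast
qed

section \<open>Separated sets under a permutation without short periods\<close>

definition shift_separated :: "'b set \<Rightarrow> ('b \<Rightarrow> 'b) \<Rightarrow> 'b set \<Rightarrow> 'b set \<Rightarrow> bool" where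
  "shift_separated M f K L \<longleftrightarrow> K \<subseteq> M \<and> L \<subseteq> M \<and> L \<inter> f ` K = {} \<and> K \<inter> f ` L = {}"

locale short_period_free =
  fixes M :: "'b set" and f :: "'b \<Rightarrow> 'b"
  assumes finite_M: "finite M" and maps: "f ` M \<subseteq> M" and inj: "inj_on f M"
    and no_period_2: "u \<in> M \<Longrightarrow> (f ^^ 2) u \<noteq> u"
    and no_period_4: "5 \<le> card M \<Longrightarrow> u \<in> M \<Longrightarrow> (f ^^ 4) u \<noteq> u"
begin

definition shift_nbhd :: "'b set \<Rightarrow> 'b set" where
  "shift_nbhd K = f ` K \<union> {x \<in> M. f x \<in> K}"

lemma surj: "f ` M = M"
  using finite_M maps inj by (simp add: endo_inj_surj)

lemma shift_nbhd_subset: "K \<subseteq> M \<Longrightarrow> shift_nbhd K \<subseteq> M"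
  unfolding shift_nbhd_def using maps by blast

lemma card_le_card_shift_nbhd:
  assumes "K \<subseteq> M"
  shows "card K \<le> card (shift_nbhd K)"
proof -
  have "card K = card (f ` K)" using inj assms by (simp add: card_image inj_on_subset)
  also have "\<dots> \<le> card (shift_nbhd K)"
    using shift_nbhd_subset[OF assms] finite_M by (intro card_mono) (auto intro: finite_subset simp: shift_nbhd_def)
  finally show ?thesis .
qed

lemma card_add_card_shift_nbhd_le:
  assumes "shift_separated M f K L"
  shows "card K + card (shift_nbhd L) \<le> card M"
proof -
  have sub: "K \<subseteq> M" "shift_nbhd L \<subseteq> M" using assms shift_nbhd_subset unfolding shift_separated_def by auto
  have "K \<inter> shift_nbhd L = {}" using assms unfolding shift_separated_def shift_nbhd_def by blast
  then have "card K + card (shift_nbhd L) = card (K \<union> shift_nbhd L)"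
    using sub finite_M by (simp add: card_Un_disjoint finite_subset)
  also have "\<dots> \<le> card M" using sub finite_M by (intro card_mono) auto
  finally show ?thesis .
qed

lemma card_add_card_le:
  assumes "shift_separated M f K L"
  shows "card K + card L \<le> card M"
  using card_add_card_shift_nbhd_le[OF assms] card_le_card_shift_nbhd[of L] assms
  unfolding shift_separated_def by linarith

lemma obtain_preimage:
  assumes "v \<in> M"
  obtains x where "x \<in> M" "f x = v"
  using assms surj by (metis imageE)

lemma two_le_card_shift_nbhd:
  assumes "K \<subseteq> M" "v \<in> K"
  shows "2 \<le> card (shift_nbhd K)"
proof -
  obtain x where x: "x \<in> M" "f x = v" using obtain_preimage assms by blast
  have "f v \<noteq> x" using no_period_2[OF x(1)] x(2) by (auto simp: numeral_2_eq_2)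
  then have "card {f v, x} = 2" by simp
  moreover have "{f v, x} \<subseteq> shift_nbhd K" using assms x unfolding shift_nbhd_def by auto
  ultimately show ?thesis
    using card_mono[of "shift_nbhd K" "{f v, x}"] shift_nbhd_subset[OF assms(1)] finite_M
    by (metis finite_subset)
qed

lemma three_le_card_shift_nbhd:
  assumes "K \<subseteq> M" "card K = 2" "5 \<le> card M"
  shows "3 \<le> card (shift_nbhd K)"
proof -
  obtain v0 v1 where v: "K = {v0, v1}" "v0 \<noteq> v1" using assms(2) card_2_iff by metis
  then have vM: "v0 \<in> M" "v1 \<in> M" using assms(1) by auto
  obtain x0 x1 where x: "x0 \<in> M" "f x0 = v0" "x1 \<in> M" "f x1 = v1"
    using obtain_preimage vM by metis
  have "f v0 \<noteq> f v1" using inj vM v(2) by (auto dest: inj_onD)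
  moreover have "f v0 \<noteq> x0" "f v1 \<noteq> x1"
    using no_period_2 x by (auto simp: numeral_2_eq_2)
  moreover have "\<not> (x0 = f v1 \<and> x1 = f v0)"
    using no_period_4[OF assms(3) vM(1)] x by (auto simp: numeral_eq_Suc)
  ultimately obtain T where "card T = 3" "T \<subseteq> {f v0, f v1, x0, x1}"
    by (metis (no_types, lifting) card_3_iff insert_mono subset_insertI)
  moreover have "{f v0, f v1, x0, x1} \<subseteq> shift_nbhd K" using v x unfolding shift_nbhd_def by auto
  ultimately show ?thesis
    using card_mono[of "shift_nbhd K" T] shift_nbhd_subset[OF assms(1)] finite_M
    by (metis finite_subset order.trans)
qed

text \<open>Both neighbours of \<open>K\<close> avoid its shift neighbourhood, whose size is at least
  \<open>max (card K) 2\<close>, and at least \<open>3\<close> when \<open>card K = 2\<close> and \<open>5 \<le> card M\<close>; this suffices when \<open>card M \<le> 6\<close>.\<close>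
lemma triple_bound:
  assumes "card M \<le> 6" "shift_separated M f K1 K2" "shift_separated M f K3 K2" "K2 \<noteq> {}"
  shows "2 * (card K1 + card K2 + card K3) \<le> 3 * card M"
proof -
  have K2: "K2 \<subseteq> M" using assms(2) unfolding shift_separated_def by blast
  let ?n = "card (shift_nbhd K2)"
  have outer: "card K1 + ?n \<le> card M" "card K3 + ?n \<le> card M"
    using card_add_card_shift_nbhd_le assms(2,3) by blast+
  have "card M + 2 * card K2 \<le> 4 * ?n"
  proof -
    have "card K2 \<le> ?n" using card_le_card_shift_nbhd[OF K2] .
    moreover have "2 \<le> ?n" using two_le_card_shift_nbhd[OF K2] assms(4) by blast
    moreover have "card K2 \<noteq> 0" using assms(4) K2 finite_M by (simp add: finite_subset)
    ultimately consider "card K2 = 1" | "card K2 = 2" "5 \<le> card M" | "card M \<le> 2 * card K2"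
      using assms(1) by linarith
    then show ?thesis
    proof cases
      case 2
      then show ?thesis using three_le_card_shift_nbhd[OF K2] assms(1) by linarith
    qed (use \<open>card K2 \<le> ?n\<close> \<open>2 \<le> ?n\<close> assms(1) in linarith)+
  qed
  then show ?thesis using outer unfolding distrib_left by linarith
qed

lemma chain_bound:
  assumes "card M \<le> 6" "2 \<le> length ys" "successively (\<lambda>u v. shift_separated M f (K u) (K v)) ys"
    "\<forall>y\<in>set ys. K y \<noteq> {}"
  shows "2 * (\<Sum>y\<leftarrow>ys. card (K y)) \<le> length ys * card M"
  using assms(2-)
proof (induction ys rule: induct_list012)
  case (3 x y zs)
  have xy: "card (K x) + card (K y) \<le> card M"
    using card_add_card_le "3.prems"(2) by simp
  show ?case
  proof (cases zs)
    case Nil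
    then show ?thesis using xy by simp
  next
    case (Cons z zs')
    show ?thesis
    proof (cases zs')
      case Nil
      have "shift_separated M f (K z) (K y)"
        using "3.prems"(2) Cons unfolding shift_separated_def by auto
      then have "2 * (card (K x) + card (K y) + card (K z)) \<le> 3 * card M"
        using triple_bound[OF assms(1)] "3.prems" Cons by simp
      then show ?thesis using Cons Nil by simp
    next
      case (Cons _ _)
      then have "2 * (\<Sum>y\<leftarrow>zs. card (K y)) \<le> length zs * card M"
        using "3.IH"(1) "3.prems" \<open>zs = z # zs'\<close> by (simp add: successively_Cons)
      then show ?thesis using xy by (simp add: algebra_simps)
    qed
  qed
qed simp_all

end

section \<open>Cycles\<close>

definition cyclic_walk :: "('a \<Rightarrow> 'a \<Rightarrow> bool) \<Rightarrow> 'a list \<Rightarrow> bool" where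
  "cyclic_walk adj cy \<longleftrightarrow> cy \<noteq> [] \<and> successively adj cy \<and> adj (last cy) (hd cy)"

lemma cyclic_walk_rotate1:
  assumes "cyclic_walk adj cy"
  shows "cyclic_walk adj (rotate1 cy)"
proof (cases cy)
  case (Cons x xs)
  then show ?thesis
    using assms by (cases xs) (auto simp: cyclic_walk_def successively_append_iff simp flip: append_Cons)
qed (use assms in \<open>simp add: cyclic_walk_def\<close>)

lemma cyclic_walk_rotate: "cyclic_walk adj cy \<Longrightarrow> cyclic_walk adj (rotate n cy)"
  by (induction n) (simp_all add: cyclic_walk_rotate1)

definition cycle_succ :: "'a list \<Rightarrow> 'a \<Rightarrow> 'a" where
  "cycle_succ cy x = cy ! (Suc (THE i. i < length cy \<and> cy ! i = x) mod length cy)"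

lemma cycle_succ_nth:
  assumes "distinct cy" "i < length cy"
  shows "cycle_succ cy (cy ! i) = cy ! (Suc i mod length cy)"
proof -
  have "(THE j. j < length cy \<and> cy ! j = cy ! i) = i"
    using assms by (auto simp: nth_eq_iff_index_eq)
  then show ?thesis unfolding cycle_succ_def by simp
qed

lemma funpow_cycle_succ_nth:
  assumes "distinct cy" "i < length cy"
  shows "(cycle_succ cy ^^ k) (cy ! i) = cy ! ((i + k) mod length cy)"
proof (induction k)
  case (Suc k)
  have "(i + k) mod length cy < length cy" using assms(2) by (intro mod_less_divisor) linarith
  then show ?case
    using Suc cycle_succ_nth[OF assms(1)] by (simp add: mod_Suc_eq)
qed (use assms in simp)

lemma cyclic_walk_obtain_path_to:
  assumes "distinct cy" "cyclic_walk adj cy" "c \<in> set cy"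
  obtains w where "is_path adj w" "set w = set cy" "last w = c" "hd w = cycle_succ cy c"
proof -
  obtain i where i: "i < length cy" "cy ! i = c" using assms(3) by (metis in_set_conv_nth)
  have ne: "cy \<noteq> []" using assms(3) by auto
  define w where "w = rotate (Suc i) cy"
  have "cyclic_walk adj w" unfolding w_def by (rule cyclic_walk_rotate[OF assms(2)])
  then have "is_path adj w" "set w = set cy"
    using assms(1) unfolding w_def is_path_iff_successively cyclic_walk_def by auto
  moreover have "hd (rotate i cy) = c" using hd_rotate_conv_nth[OF ne, of i] i by simp
  then have "last w = c"
    unfolding w_def using ne by (cases "rotate i cy") auto
  moreover have "hd w = cycle_succ cy c"
    unfolding w_def using hd_rotate_conv_nth[OF ne, of "Suc i"] cycle_succ_nth[OF assms(1) i(1)] i(2)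
    by (simp del: rotate_Suc)
  ultimately show ?thesis using that by blast
qed

lemma cycle_comp_obtain_cycle:
  assumes "cycle_comp adj C"
  obtains cy where "distinct cy" "set cy = set C" "3 \<le> length cy" "cyclic_walk adj cy"
  using assms unfolding cycle_comp_def has_spanning_cycle_def cyclic_walk_def successively_conv_nth
  by force

lemma cycle_comp_obtain_path_to:
  assumes "cycle_comp adj C" "c \<in> set C"
  obtains w where "is_path adj w" "set w = set C" "last w = c"
proof -
  obtain cy where "distinct cy" "set cy = set C" "cyclic_walk adj cy"
    using cycle_comp_obtain_cycle[OF assms(1)] by metis
  then show ?thesis using that cyclic_walk_obtain_path_to assms(2) by metis
qed

lemma short_period_free_cycle_succ:
  assumes "distinct cy" "3 \<le> length cy"
  shows "short_period_free (set cy) (cycle_succ cy)"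
proof
  let ?m = "length cy"
  have succ: "(cycle_succ cy ^^ k) (cy ! i) = cy ! ((i + k) mod ?m)" if "i < ?m" for i k
    using funpow_cycle_succ_nth[OF assms(1) that] .
  have no_period: "(cycle_succ cy ^^ k) u \<noteq> u" if "u \<in> set cy" "0 < k" "k < ?m" for u k
  proof -
    obtain i where i: "i < ?m" "cy ! i = u" using \<open>u \<in> set cy\<close> by (metis in_set_conv_nth)
    have "(i + k) mod ?m \<noteq> i"
      using i(1) that(2,3) by (cases "i + k < ?m") (auto simp: le_mod_geq)
    moreover have "(i + k) mod ?m < ?m" using i(1) by (intro mod_less_divisor) linarith
    ultimately show ?thesis
      using succ[OF i(1)] i nth_eq_iff_index_eq[OF assms(1) _ i(1)] by simp
  qed
  show "finite (set cy)" by simp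
  show "cycle_succ cy ` set cy \<subseteq> set cy"
  proof
    fix v assume "v \<in> cycle_succ cy ` set cy"
    then obtain i where "i < ?m" "v = cy ! (Suc i mod ?m)"
      using cycle_succ_nth[OF assms(1)] by (auto simp: in_set_conv_nth)
    then show "v \<in> set cy" using assms(2) by (auto intro!: nth_mem mod_less_divisor)
  qed
  show "inj_on (cycle_succ cy) (set cy)"
  proof (rule inj_on_inverseI)
    fix u assume "u \<in> set cy"
    then obtain i where i: "i < ?m" "cy ! i = u" by (metis in_set_conv_nth)
    have m: "Suc (?m - 1) = ?m" using assms(2) by simp
    have "(cycle_succ cy ^^ (?m - 1)) (cycle_succ cy u) = (cycle_succ cy ^^ Suc (?m - 1)) u"
      by (simp only: funpow_Suc_right comp_apply)
    also have "\<dots> = (cycle_succ cy ^^ ?m) u" by (simp only: m)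
    also have "\<dots> = u" using succ[OF i(1), of ?m] i by simp
    finally show "(cycle_succ cy ^^ (?m - 1)) (cycle_succ cy u) = u" .
  qed
  show "(cycle_succ cy ^^ 2) u \<noteq> u" if "u \<in> set cy" for u
    using no_period[OF that] assms(2) by simp
  show "(cycle_succ cy ^^ 4) u \<noteq> u" if "5 \<le> card (set cy)" "u \<in> set cy" for u
    using no_period[OF that(2)] that(1) distinct_card[OF assms(1)] by simp
qed

section \<open>Rerouting in a canonical partition\<close>

locale canonical_partition =
  fixes V :: "'a set" and adj :: "'a \<Rightarrow> 'a \<Rightarrow> bool" and S :: "'a list set"
  assumes simple: "simple_graph V adj" and canonical: "canonical V adj S"
begin

lemma path_partition: "path_partition V adj S"
  using canonical unfolding canonical_def by blast

lemma component_is_path: "p \<in> S \<Longrightarrow> is_path adj p"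
  using path_partition unfolding path_partition_def by blast

lemma components_disjoint: "p \<in> S \<Longrightarrow> q \<in> S \<Longrightarrow> p \<noteq> q \<Longrightarrow> set p \<inter> set q = {}"
  using path_partition unfolding path_partition_def by blast

lemma component_unique: "p \<in> S \<Longrightarrow> q \<in> S \<Longrightarrow> x \<in> set p \<Longrightarrow> x \<in> set q \<Longrightarrow> p = q"
  using components_disjoint by blast

lemma path_comp_disjoint_cycle_comp:
  "P \<in> S \<Longrightarrow> path_comp adj P \<Longrightarrow> C \<in> S \<Longrightarrow> cycle_comp adj C \<Longrightarrow> set P \<inter> set C = {}"
  using components_disjoint unfolding path_comp_def by blast

lemma symp_adj: "symp adj"
  using simple unfolding simple_graph_def by (blast intro: sympI)

lemma adj_sym: "adj u v \<Longrightarrow> adj v u"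
  using symp_adj by (rule sympD)

lemma is_path_rev_iff: "is_path adj (rev p) \<longleftrightarrow> is_path adj p"
  using is_path_rev[OF symp_adj] .

lemma finite_components: "finite S"
proof -
  have "inj_on hd S"
  proof (rule inj_onI)
    fix p q assume "p \<in> S" "q \<in> S" "hd p = hd q"
    moreover have "hd p \<in> set p" "hd q \<in> set q"
      using \<open>p \<in> S\<close> \<open>q \<in> S\<close> component_is_path by (simp_all add: is_path_def)
    ultimately show "p = q" using component_unique by metis
  qed
  moreover have "hd ` S \<subseteq> V"
  proof
    fix x assume "x \<in> hd ` S"
    then obtain p where "p \<in> S" "x = hd p" by blast
    then show "x \<in> V"
      using component_is_path path_partition unfolding path_partition_def is_path_def by fastforce
  qed
  moreover have "finite V" using simple unfolding simple_graph_def by blast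
  ultimately show ?thesis by (metis finite_imageD finite_subset)
qed

text \<open>Swapping the paths \<open>N\<close> in for the components \<open>T\<close> gives another path partition.\<close>
lemma card_le_card_covering_paths:
  assumes T: "T \<subseteq> S" and N: "\<forall>n\<in>N. is_path adj n" "finite N"
    and N_disjoint: "\<forall>n\<in>N. \<forall>n'\<in>N. n \<noteq> n' \<longrightarrow> set n \<inter> set n' = {}"
    and cover: "\<Union>(set ` N) = \<Union>(set ` T)"
  shows "card T \<le> card N"
proof -
  let ?S = "(S - T) \<union> N"
  have "path_partition V adj ?S"
    unfolding path_partition_def
  proof (intro conjI ballI impI)
    show "is_path adj p" if "p \<in> ?S" for p using that component_is_path N by blast
    have "\<Union>(set ` ?S) = \<Union>(set ` (S - T)) \<union> \<Union>(set ` T)" using cover by blast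
    also have "\<dots> = \<Union>(set ` S)" using T by blast
    finally show "\<Union>(set ` ?S) = V" using path_partition unfolding path_partition_def by simp
    show "set p \<inter> set q = {}" if "p \<in> ?S" "q \<in> ?S" "p \<noteq> q" for p q
    proof -
      have old_new: "set a \<inter> set n = {}" if "a \<in> S - T" "n \<in> N" for a n
        using that cover T components_disjoint by blast
      consider "p \<in> N" "q \<in> N" | "p \<in> N" "q \<in> S - T" | "p \<in> S - T" "q \<in> N"
        | "p \<in> S - T" "q \<in> S - T"
        using \<open>p \<in> ?S\<close> \<open>q \<in> ?S\<close> by blast
      then show ?thesis
      proof cases
        case 1 then show ?thesis using N_disjoint \<open>p \<noteq> q\<close> by blast
      next
        case 2 then show ?thesis using old_new[of q p] by blast
      next
        case 3 then show ?thesis using old_new[of p q] by blast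
      next
        case 4 then show ?thesis using components_disjoint \<open>p \<noteq> q\<close> by blast
      qed
    qed
  qed
  then have "card S \<le> card ?S" using canonical unfolding canonical_def by blast
  also have "\<dots> \<le> card (S - T) + card N" by (rule card_Un_le)
  also have "card (S - T) = card S - card T"
    using T finite_components by (simp add: card_Diff_subset finite_subset)
  finally show ?thesis using card_mono[OF finite_components T] by linarith
qed

lemma no_path_covering_two_components:
  assumes "T \<subseteq> S" "2 \<le> card T" "is_path adj n" "set n = \<Union>(set ` T)"
  shows False
  using card_le_card_covering_paths[of T "{n}"] assms by auto

lemma no_two_paths_covering_three_components:
  assumes "T \<subseteq> S" "3 \<le> card T" "is_path adj n1" "is_path adj n2" "set n1 \<inter> set n2 = {}"
    "set n1 \<union> set n2 = \<Union>(set ` T)"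
  shows False
proof -
  have "card T \<le> card {n1, n2}"
    using card_le_card_covering_paths[of T "{n1, n2}"] assms by (auto simp: Int_commute)
  also have "\<dots> \<le> 2" by (simp add: card_insert_if)
  finally show False using assms(2) by linarith
qed

lemma path_comp_obtain_path_to_end:
  assumes "Q \<in> S" "e = hd Q \<or> e = last Q"
  obtains q where "is_path adj q" "set q = set Q" "last q = e"
proof -
  have "is_path adj Q" "Q \<noteq> []" using component_is_path[OF assms(1)] by (auto simp: is_path_def)
  then show ?thesis
    using that assms(2) is_path_rev_iff[of Q] by (metis last_rev set_rev hd_rev)
qed

lemma no_path_covering_two:
  assumes "P \<in> S" "C \<in> S" "P \<noteq> C" "is_path adj n" "set n = set P \<union> set C"
  shows False
  using no_path_covering_two_components[of "{P, C}" n] assms by auto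

text \<open>Rerouting at an edge \<open>p p'\<close> of \<open>P = L p p' R\<close>: the paths \<open>L p wa\<close> and \<open>wb p' R\<close>
  would cover the three components \<open>P\<close>, \<open>A\<close>, \<open>B\<close>.\<close>
lemma no_edge_to_ends_of_two_components:
  assumes S: "P \<in> S" "A \<in> S" "B \<in> S" "P \<noteq> A" "P \<noteq> B" "A \<noteq> B"
    and P: "P = L @ p # p' # R"
    and A: "is_path adj wa" "set wa = set A" "adj p (last wa)"
    and B: "is_path adj wb" "set wb = set B" "adj p' (last wb)"
  shows False
proof -
  have disj: "set P \<inter> set A = {}" "set P \<inter> set B = {}" "set A \<inter> set B = {}"
    using components_disjoint S by blast+
  have "is_path adj (L @ p # p' # R)" using component_is_path S(1) P by simp
  note left = is_path_split_at(1)[OF this] and right = is_path_split_at(2)[OF this]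
  have "distinct P" using component_is_path[OF S(1)] by (simp add: is_path_def)
  have "wa \<noteq> []" "wb \<noteq> []" using A B by (auto simp: is_path_def)
  have n1: "is_path adj ((L @ [p]) @ rev wa)"
    by (rule is_path_appendI) (use left A \<open>wa \<noteq> []\<close> disj P is_path_rev_iff in \<open>auto simp: hd_rev\<close>)
  have n2: "is_path adj (wb @ p' # R)"
    by (rule is_path_appendI) (use right B disj P adj_sym in auto)
  show False
    by (rule no_two_paths_covering_three_components[of "{P, A, B}", OF _ _ n1 n2])
      (use S disj \<open>distinct P\<close> A B P in auto)
qed

lemma cycle_attachments_of_edge_coincide:
  assumes P: "P \<in> S" "path_comp adj P" "P = L @ p # p' # R"
    and C: "C \<in> S" "cycle_comp adj C" "c \<in> set C" "adj p c"
    and D: "D \<in> S" "cycle_comp adj D" "d \<in> set D" "adj p' d"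
  shows "C = D"
proof (rule ccontr)
  assume "C \<noteq> D"
  obtain wc where "is_path adj wc" "set wc = set C" "last wc = c"
    using cycle_comp_obtain_path_to[OF C(2,3)] .
  moreover obtain wd where "is_path adj wd" "set wd = set D" "last wd = d"
    using cycle_comp_obtain_path_to[OF D(2,3)] .
  moreover have "P \<noteq> C" "P \<noteq> D" using P(2) C(2) D(2) by (auto simp: path_comp_def)
  ultimately show False
    using no_edge_to_ends_of_two_components[of P C D L p p' R wc wd] P C D \<open>C \<noteq> D\<close>
    by auto
qed

lemma no_edge_to_cycle_and_other_path_end:
  assumes P: "P \<in> S" "path_comp adj P" "P = L @ p # p' # R"
    and C: "C \<in> S" "cycle_comp adj C" "c \<in> set C"
    and Q: "Q \<in> S" "path_comp adj Q" "Q \<noteq> P" "e = hd Q \<or> e = last Q"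
  shows "\<not> (adj p c \<and> adj p' e)" "\<not> (adj p e \<and> adj p' c)"
proof -
  obtain w where w: "is_path adj w" "set w = set C" "last w = c"
    using cycle_comp_obtain_path_to[OF C(2,3)] .
  obtain q where q: "is_path adj q" "set q = set Q" "last q = e"
    using path_comp_obtain_path_to_end[OF Q(1,4)] .
  have "P \<noteq> C" "Q \<noteq> C" using P(2) Q(2) C(2) by (auto simp: path_comp_def)
  then show "\<not> (adj p c \<and> adj p' e)" "\<not> (adj p e \<and> adj p' c)"
    using no_edge_to_ends_of_two_components[of P C Q L p p' R w q]
      no_edge_to_ends_of_two_components[of P Q C L p p' R q w] P C Q w q
    by auto
qed

text \<open>The Hamiltonian path of \<open>C\<close> between \<open>c\<close> and its successor can be spliced into the edge \<open>p p'\<close>.\<close>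
lemma no_edge_to_cycle_successor_pair:
  assumes P: "P \<in> S" "path_comp adj P" "P = L @ p # p' # R"
    and C: "C \<in> S" "cycle_comp adj C" "distinct cy" "cyclic_walk adj cy" "set cy = set C"
      "c \<in> set C"
  shows "\<not> (adj p c \<and> adj p' (cycle_succ cy c))" "\<not> (adj p (cycle_succ cy c) \<and> adj p' c)"
proof -
  obtain w where w: "is_path adj w" "set w = set C" "last w = c" "hd w = cycle_succ cy c"
    using cyclic_walk_obtain_path_to[OF C(3,4)] C(5,6) by metis
  have "P \<noteq> C" using P(2) C(2) by (auto simp: path_comp_def)
  have disj: "set P \<inter> set C = {}" using path_comp_disjoint_cycle_comp P C by blast
  have "is_path adj (L @ p # p' # R)" using component_is_path P by simp
  note left = is_path_split_at(1)[OF this] and right = is_path_split_at(2)[OF this]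
  have "distinct P" using component_is_path[OF P(1)] by (simp add: is_path_def)
  have "w \<noteq> []" using w by (auto simp: is_path_def)
  have cover: "set ((L @ [p]) @ v @ p' # R) = set P \<union> set C" if "set v = set C" for v
    using that P(3) by auto
  show "\<not> (adj p c \<and> adj p' (cycle_succ cy c))"
  proof
    assume adj: "adj p c \<and> adj p' (cycle_succ cy c)"
    have "is_path adj (rev w @ p' # R)"
      by (rule is_path_appendI) (use right w \<open>w \<noteq> []\<close> disj P adj adj_sym is_path_rev_iff in \<open>auto simp: last_rev\<close>)
    then have "is_path adj ((L @ [p]) @ rev w @ p' # R)"
      by (rule is_path_appendI[OF left]) (use w \<open>w \<noteq> []\<close> disj P adj \<open>distinct P\<close> in \<open>auto simp: hd_rev\<close>)
    then show False by (rule no_path_covering_two[OF P(1) C(1) \<open>P \<noteq> C\<close>]) (use cover w(2) in simp)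
  qed
  show "\<not> (adj p (cycle_succ cy c) \<and> adj p' c)"
  proof
    assume adj: "adj p (cycle_succ cy c) \<and> adj p' c"
    have "is_path adj (w @ p' # R)"
      by (rule is_path_appendI) (use right w disj P adj adj_sym in auto)
    then have "is_path adj ((L @ [p]) @ w @ p' # R)"
      by (rule is_path_appendI[OF left]) (use w \<open>w \<noteq> []\<close> disj P adj \<open>distinct P\<close> in auto)
    then show False by (rule no_path_covering_two[OF P(1) C(1) \<open>P \<noteq> C\<close>]) (use cover w(2) in simp)
  qed
qed

lemma no_edge_to_cycle_and_own_end:
  assumes P: "P \<in> S" "path_comp adj P" "P = L @ p # p' # R"
    and C: "C \<in> S" "cycle_comp adj C" "c \<in> set C"
  shows "L \<noteq> [] \<Longrightarrow> \<not> (adj p c \<and> adj p' (hd L))"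
    and "R \<noteq> [] \<Longrightarrow> \<not> (adj p (last R) \<and> adj p' c)"
proof -
  obtain w where w: "is_path adj w" "set w = set C" "last w = c"
    using cycle_comp_obtain_path_to[OF C(2,3)] .
  have "P \<noteq> C" using P(2) C(2) by (auto simp: path_comp_def)
  have disj: "set P \<inter> set C = {}" using path_comp_disjoint_cycle_comp P C by blast
  have "is_path adj (L @ p # p' # R)" using component_is_path P by simp
  note left = is_path_split_at(1)[OF this] and right = is_path_split_at(2)[OF this]
  have rev_left: "is_path adj (rev (L @ [p]))" and rev_right: "is_path adj (rev (p' # R))"
    using left right is_path_rev_iff by blast+
  have "distinct P" using component_is_path[OF P(1)] by (simp add: is_path_def)
  have "w \<noteq> []" using w by (auto simp: is_path_def)
  show "\<not> (adj p c \<and> adj p' (hd L))" if "L \<noteq> []"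
  proof
    assume adj: "adj p c \<and> adj p' (hd L)"
    have "is_path adj (rev (L @ [p]) @ p' # R)"
      by (rule is_path_appendI) (use rev_left right P \<open>distinct P\<close> adj adj_sym that in \<open>auto simp: last_rev\<close>)
    then have "is_path adj (w @ rev (L @ [p]) @ p' # R)"
      by (rule is_path_appendI[OF w(1)]) (use w disj P adj adj_sym in auto)
    then show False by (rule no_path_covering_two[OF P(1) C(1) \<open>P \<noteq> C\<close>]) (use w(2) P(3) in auto)
  qed
  show "\<not> (adj p (last R) \<and> adj p' c)" if "R \<noteq> []"
  proof
    assume adj: "adj p (last R) \<and> adj p' c"
    have "is_path adj (rev (p' # R) @ rev w)"
      by (rule is_path_appendI) (use rev_right w \<open>w \<noteq> []\<close> disj P adj is_path_rev_iff in \<open>auto simp: hd_rev\<close>)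
    then have "is_path adj ((L @ [p]) @ rev (p' # R) @ rev w)"
      by (rule is_path_appendI[OF left]) (use w disj P adj \<open>distinct P\<close> that in \<open>auto simp: hd_rev\<close>)
    then show False by (rule no_path_covering_two[OF P(1) C(1) \<open>P \<noteq> C\<close>]) (use w(2) P(3) in auto)
  qed
qed

text \<open>With the edges \<open>(hd B, last E)\<close> and \<open>(last B, hd A)\<close>, the vertices of \<open>P = A p B s E\<close> can be
  traversed as \<open>p, rev A, rev B, rev E, s\<close>, which is then closed up by the cycles at \<open>p\<close> and \<open>s\<close>.\<close>
lemma no_cycle_edges_around_crossing_end_edges:
  assumes P: "P \<in> S" "path_comp adj P" "P = A @ p # B @ s # E" "A \<noteq> []" "B \<noteq> []" "E \<noteq> []"
    and C: "C \<in> S" "cycle_comp adj C" "c \<in> set C" "adj p c"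
    and D: "D \<in> S" "cycle_comp adj D" "d \<in> set D" "adj s d"
    and cross: "adj (hd B) (last E)" "adj (last B) (hd A)"
  shows False
proof -
  obtain wc where wc: "is_path adj wc" "set wc = set C" "last wc = c"
    using cycle_comp_obtain_path_to[OF C(2,3)] .
  obtain wd where wd: "is_path adj wd" "set wd = set D" "last wd = d"
    using cycle_comp_obtain_path_to[OF D(2,3)] .
  have "P \<noteq> C" using P(2) C(2) by (auto simp: path_comp_def)
  have disj: "set P \<inter> set C = {}" "set P \<inter> set D = {}"
    using path_comp_disjoint_cycle_comp P C D by blast+
  have "is_path adj ((A @ [p]) @ B @ (s # E))" using component_is_path P by simp
  then have pA: "is_path adj (A @ [p])" and pB: "is_path adj B" and pE: "is_path adj (s # E)"
    using is_path_appendD P(5) by blast+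
  have rev_paths: "is_path adj (rev (A @ [p]))" "is_path adj (rev B)" "is_path adj (rev (s # E))"
    using pA pB pE is_path_rev_iff by blast+
  have "distinct P" using component_is_path[OF P(1)] by (simp add: is_path_def)
  have "wc \<noteq> []" "wd \<noteq> []" using wc wd by (auto simp: is_path_def)
  have "is_path adj (rev B @ rev (s # E))"
    by (rule is_path_appendI) (use rev_paths P \<open>distinct P\<close> cross adj_sym in \<open>auto simp: hd_rev last_rev\<close>)
  then have "is_path adj (rev (A @ [p]) @ rev B @ rev (s # E))"
    by (rule is_path_appendI[rotated]) (use rev_paths P \<open>distinct P\<close> cross adj_sym in \<open>auto simp: hd_rev last_rev\<close>)
  then have core: "is_path adj (wc @ rev (A @ [p]) @ rev B @ rev (s # E))"
    by (rule is_path_appendI[OF wc(1)]) (use wc disj P C(4) adj_sym in \<open>auto simp: hd_rev\<close>)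
  show False
  proof (cases "C = D")
    case True
    then show False using no_path_covering_two[OF P(1) C(1) \<open>P \<noteq> C\<close> core] wc(2) P(3) by auto
  next
    case False
    have "set C \<inter> set D = {}" using components_disjoint C(1) D(1) False by blast
    then have full: "is_path adj ((wc @ rev (A @ [p]) @ rev B @ rev (s # E)) @ rev wd)"
      by (intro is_path_appendI[OF core]) (use wd \<open>wd \<noteq> []\<close> wc disj P D(4) is_path_rev_iff in \<open>auto simp: hd_rev\<close>)
    show False
      by (rule no_path_covering_two_components[of "{P, C, D}", OF _ _ full])
        (use P(1,3) C(1) D(1) \<open>P \<noteq> C\<close> wc(2) wd(2) in \<open>auto simp: card_insert_if\<close>)
  qed
qed

end

section \<open>The segment \<open>X\<close>\<close>

lemma goes_to_adj: "goes_to V adj S x y \<Longrightarrow> adj x y"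
  unfolding goes_to_def free_edge_def by blast

locale canonical_segment = canonical_partition +
  fixes P X :: "'a list" and X' :: "'a set"
  assumes P_in_S: "P \<in> S" and P_path_comp: "path_comp adj P"
    and X_segment: "\<exists>pre suf. P = pre @ X @ suf"
    and X_V2b: "set X \<subseteq> V2b V adj S"
    and X'_eq: "X' = {x \<in> set X. \<exists>C\<in>S. cycle_comp adj C \<and> (\<exists>y\<in>set C. goes_to V adj S x y)}"
begin

lemma distinct_P: "distinct P"
  using component_is_path[OF P_in_S] by (simp add: is_path_def)

lemma X_V2: "set X \<subseteq> V2 V adj S"
  using X_V2b unfolding V2b_def by blast

lemma X'_subset_X: "X' \<subseteq> set X"
  using X'_eq by blast

lemma V2_index_interior:
  assumes "i < length P" "P ! i \<in> V2 V adj S"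
  shows "0 < i" "Suc i < length P"
proof -
  have "hd P \<in> V1 adj S" "last P \<in> V1 adj S"
    using P_in_S P_path_comp unfolding V1_def by blast+
  then have "P ! i \<noteq> hd P \<and> P ! i \<noteq> last P" using assms(2) unfolding V2_def by auto
  moreover have "P \<noteq> []" using assms(1) by auto
  ultimately show "0 < i" "Suc i < length P"
    using assms(1) by (metis gr0I hd_conv_nth, metis Suc_lessI diff_Suc_1 last_conv_nth)
qed

lemma X'_obtain_cycle_neighbour:
  assumes "x \<in> X'"
  obtains C c where "C \<in> S" "cycle_comp adj C" "c \<in> set C" "adj x c"
proof -
  have "\<exists>C\<in>S. cycle_comp adj C \<and> (\<exists>y\<in>set C. goes_to V adj S x y)"
    using assms X'_eq by simp
  then show ?thesis using that goes_to_adj by metis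
qed

lemma X_minus_X'_obtain_path_end_neighbour:
  assumes "x \<in> set X" "x \<notin> X'"
  obtains Q u where "Q \<in> S" "path_comp adj Q" "u = hd Q \<or> u = last Q" "adj x u"
proof -
  have "x \<in> V2 V adj S" using assms(1) X_V2 by blast
  then obtain u where u: "u \<in> V1 adj S" "free_edge adj S x u" unfolding V2_def by blast
  then obtain Q where "Q \<in> S" "path_comp adj Q \<and> (u = hd Q \<or> u = last Q) \<or> cycle_comp adj Q \<and> u \<in> set Q"
    unfolding V1_def by blast
  moreover have "\<not> (cycle_comp adj Q \<and> u \<in> set Q)"
    using \<open>Q \<in> S\<close> \<open>x \<in> V2 V adj S\<close> u assms unfolding X'_eq goes_to_def by blast
  ultimately show ?thesis using that u(2) unfolding free_edge_def by blast
qed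

text \<open>A vertex of \<open>X - X'\<close> next to \<open>X'\<close> has a free edge to an end of a path component; rerouting
  rules out every end except the far end of \<open>P\<close> itself.\<close>
lemma X'_then_X_minus_X'_adj_last:
  assumes i: "Suc i < length P" and "P ! i \<in> X'" "P ! Suc i \<in> set X" "P ! Suc i \<notin> X'"
  shows "adj (P ! Suc i) (last P)"
proof -
  obtain C c where C: "C \<in> S" "cycle_comp adj C" "c \<in> set C" "adj (P ! i) c"
    using X'_obtain_cycle_neighbour assms(2) by blast
  obtain Q u where Q: "Q \<in> S" "path_comp adj Q" "u = hd Q \<or> u = last Q" "adj (P ! Suc i) u"
    using X_minus_X'_obtain_path_end_neighbour assms(3,4) by blast
  note split = take_nth_nth_drop[OF i]
  have "Q = P"
    using no_edge_to_cycle_and_other_path_end(1)[OF P_in_S P_path_comp split C(1-3) Q(1,2) _ Q(3)] C(4) Q(4)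
    by blast
  have "0 < i" using V2_index_interior assms(2) X'_subset_X X_V2 i by auto
  then have "take i P \<noteq> []" "hd (take i P) = hd P" using i by auto
  then have "u \<noteq> hd P"
    using no_edge_to_cycle_and_own_end(1)[OF P_in_S P_path_comp split C(1-3)] C(4) Q(4) by metis
  then show ?thesis using Q(3,4) \<open>Q = P\<close> by blast
qed

lemma X_minus_X'_then_X'_adj_hd:
  assumes i: "Suc i < length P" and "P ! Suc i \<in> X'" "P ! i \<in> set X" "P ! i \<notin> X'"
  shows "adj (P ! i) (hd P)"
proof -
  obtain C c where C: "C \<in> S" "cycle_comp adj C" "c \<in> set C" "adj (P ! Suc i) c"
    using X'_obtain_cycle_neighbour assms(2) by blast
  obtain Q u where Q: "Q \<in> S" "path_comp adj Q" "u = hd Q \<or> u = last Q" "adj (P ! i) u"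
    using X_minus_X'_obtain_path_end_neighbour assms(3,4) by blast
  note split = take_nth_nth_drop[OF i]
  have "Q = P"
    using no_edge_to_cycle_and_other_path_end(2)[OF P_in_S P_path_comp split C(1-3) Q(1,2) _ Q(3)] C(4) Q(4)
    by blast
  have "Suc (Suc i) < length P" using V2_index_interior assms(2) X'_subset_X X_V2 i by auto
  then have "drop (Suc (Suc i)) P \<noteq> []" "last (drop (Suc (Suc i)) P) = last P" by auto
  then have "u \<noteq> last P"
    using no_edge_to_cycle_and_own_end(2)[OF P_in_S P_path_comp split C(1-3)] C(4) Q(4) by metis
  then show ?thesis using Q(3,4) \<open>Q = P\<close> by blast
qed

lemma no_gap_in_X':
  assumes "Suc i < j" "j < length P" "P ! i \<in> X'" "P ! j \<in> X'" "P ! Suc i \<notin> X'" "P ! (j - 1) \<notin> X'"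
  shows False
proof -
  obtain pre suf where X: "P = pre @ X @ suf" using X_segment by blast
  have in_X: "P ! t \<in> set X \<longleftrightarrow> length pre \<le> t \<and> t < length pre + length X" if "t < length P" for t
    using nth_in_segment_iff[OF X distinct_P that] .
  have "P ! Suc i \<in> set X" "P ! (j - 1) \<in> set X"
    using in_X[of i] in_X[of j] in_X[of "Suc i"] in_X[of "j - 1"] assms(1-4) X'_subset_X by auto
  then have right: "adj (P ! Suc i) (last P)" and left: "adj (P ! (j - 1)) (hd P)"
    using X'_then_X_minus_X'_adj_last[of i] X_minus_X'_then_X'_adj_hd[of "j - 1"] assms by auto
  have "0 < i" "Suc j < length P" using V2_index_interior assms(1-4) X'_subset_X X_V2 by auto
  then have A: "take i P \<noteq> []" "hd (take i P) = hd P"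
    and E: "drop (Suc j) P \<noteq> []" "last (drop (Suc j) P) = last P" by auto
  obtain C c where C: "C \<in> S" "cycle_comp adj C" "c \<in> set C" "adj (P ! i) c"
    using X'_obtain_cycle_neighbour assms(3) by blast
  obtain D d where D: "D \<in> S" "cycle_comp adj D" "d \<in> set D" "adj (P ! j) d"
    using X'_obtain_cycle_neighbour assms(4) by blast
  have "i < j" using assms(1) by simp
  note B = segment_hd_last[OF assms(1,2)]
  have "adj (hd (take (j - Suc i) (drop (Suc i) P))) (last (drop (Suc j) P))"
    using B(2) E(2) right by simp
  moreover have "adj (last (take (j - Suc i) (drop (Suc i) P))) (hd (take i P))"
    using B(3) A(2) left by simp
  ultimately show False
    using no_cycle_edges_around_crossing_end_edges[OF P_in_S P_path_comp
        take_nth_segment_nth_drop[OF \<open>i < j\<close> assms(2)] A(1) B(1) E(1) C D]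
    by blast
qed

lemma X'_between_closed:
  assumes "i < l" "l < j" "j < length P" "P ! i \<in> X'" "P ! j \<in> X'"
  shows "P ! l \<in> X'"
proof (rule ccontr)
  assume "P ! l \<notin> X'"
  define I where "I = {t. t < l \<and> P ! t \<in> X'}"
  define J where "J = {t. l < t \<and> t < length P \<and> P ! t \<in> X'}"
  have "finite I" "I \<noteq> {}" "finite J" "J \<noteq> {}" using assms unfolding I_def J_def by auto
  define i' where "i' = Max I"
  define j' where "j' = Min J"
  have i': "i' < l" "P ! i' \<in> X'" "P ! Suc i' \<notin> X'"
  proof -
    show "i' < l" "P ! i' \<in> X'" using Max_in[OF \<open>finite I\<close> \<open>I \<noteq> {}\<close>] unfolding i'_def I_def by auto
    show "P ! Suc i' \<notin> X'"
    proof
      assume "P ! Suc i' \<in> X'"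
      then have "Suc i' \<in> I" using \<open>i' < l\<close> \<open>P ! l \<notin> X'\<close> unfolding I_def by (cases "Suc i' = l") auto
      then show False using Max_ge[OF \<open>finite I\<close>] unfolding i'_def by fastforce
    qed
  qed
  have j': "l < j'" "j' < length P" "P ! j' \<in> X'" "P ! (j' - 1) \<notin> X'"
  proof -
    show "l < j'" "j' < length P" "P ! j' \<in> X'"
      using Min_in[OF \<open>finite J\<close> \<open>J \<noteq> {}\<close>] unfolding j'_def J_def by auto
    show "P ! (j' - 1) \<notin> X'"
    proof
      assume "P ! (j' - 1) \<in> X'"
      then have "j' - 1 \<in> J"
        using \<open>l < j'\<close> \<open>j' < length P\<close> \<open>P ! l \<notin> X'\<close> unfolding J_def by (cases "j' - 1 = l") auto
      then show False using Min_le[OF \<open>finite J\<close>] \<open>l < j'\<close> unfolding j'_def by fastforce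
    qed
  qed
  show False
    using no_gap_in_X'[OF _ j'(2) i'(2) j'(3) i'(3) j'(4)] i'(1) j'(1) by linarith
qed

lemma X'_segment:
  assumes "X' \<noteq> {}"
  obtains pre Y suf where "P = pre @ Y @ suf" "set Y = X'" "distinct Y"
proof (rule segment_of_between_closed[OF distinct_P _ assms])
  show "X' \<subseteq> set P" using X'_subset_X X_segment by auto
next
  fix i l j assume "i < l" "l < j" "j < length P" "P ! i \<in> X'" "P ! j \<in> X'"
  then show "P ! l \<in> X'" by (rule X'_between_closed)
next
  fix pre ys suf assume "P = pre @ ys @ suf" "set ys = X'" "distinct ys"
  then show thesis by (rule that)
qed

text \<open>Cycles attached to consecutive vertices of \<open>P\<close> coincide, and the vertices of \<open>X'\<close> are
  consecutive.\<close>
lemma X'_unique_cycle: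
  assumes "2 \<le> card X'"
  shows "\<exists>C\<in>S. cycle_comp adj C
    \<and> (\<forall>x\<in>X'. \<forall>D\<in>S. \<forall>d\<in>set D. cycle_comp adj D \<longrightarrow> adj x d \<longrightarrow> D = C)"
proof -
  have "X' \<noteq> {}" using assms by auto
  then obtain pre Y suf where Y: "P = pre @ Y @ suf" "set Y = X'" "distinct Y"
    by (rule X'_segment)
  have "2 \<le> length Y" using Y(2,3) assms distinct_card by metis
  have same: "D = E"
    if "Suc t < length Y" "D \<in> S" "cycle_comp adj D" "d \<in> set D" "adj (Y ! t) d"
      "E \<in> S" "cycle_comp adj E" "e \<in> set E" "adj (Y ! Suc t) e" for t D d E e
    using cycle_attachments_of_edge_coincide[OF P_in_S P_path_comp consecutive_in_segment[OF Y(1)]] that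
    by blast
  have in_X': "Y ! t \<in> X'" if "t < length Y" for t
    using Y(2) that nth_mem by blast
  have "0 < length Y" "Suc 0 < length Y" using \<open>2 \<le> length Y\<close> by auto
  obtain C0 c0 where C0: "C0 \<in> S" "cycle_comp adj C0" "c0 \<in> set C0" "adj (Y ! 0) c0"
    by (rule X'_obtain_cycle_neighbour[OF in_X'[OF \<open>0 < length Y\<close>]])
  have "D = C0" if "t < length Y" "D \<in> S" "cycle_comp adj D" "d \<in> set D" "adj (Y ! t) d" for t D d
    using that
  proof (induction t arbitrary: D d)
    case 0
    obtain E e where E: "E \<in> S" "cycle_comp adj E" "e \<in> set E" "adj (Y ! Suc 0) e"
      by (rule X'_obtain_cycle_neighbour[OF in_X'[OF \<open>Suc 0 < length Y\<close>]])
    have "D = E" by (rule same[OF \<open>Suc 0 < length Y\<close> 0(2-5) E])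
    moreover have "C0 = E" by (rule same[OF \<open>Suc 0 < length Y\<close> C0 E])
    ultimately show ?case by simp
  next
    case (Suc t)
    have "t < length Y" using Suc.prems(1) by simp
    obtain E e where E: "E \<in> S" "cycle_comp adj E" "e \<in> set E" "adj (Y ! t) e"
      by (rule X'_obtain_cycle_neighbour[OF in_X'[OF \<open>t < length Y\<close>]])
    have "E = D" by (rule same[OF Suc.prems(1) E Suc.prems(2-5)])
    moreover have "E = C0" by (rule Suc.IH[OF \<open>t < length Y\<close> E])
    ultimately show ?case by simp
  qed
  then show ?thesis using C0(1,2) Y(2) by (metis in_set_conv_nth)
qed

text \<open>Along the segment of \<open>X'\<close>, the sets of vertices of \<open>C\<close> that consecutive vertices go to are
  separated by the successor map of \<open>C\<close>; the counting bound for such chains does the rest.\<close>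
lemma X'_balanced_edges_le:
  assumes "2 \<le> card X'" "C \<in> S" "cycle_comp adj C" "card (set C) \<le> 6"
    and unique: "\<And>x D d. x \<in> X' \<Longrightarrow> D \<in> S \<Longrightarrow> d \<in> set D \<Longrightarrow> cycle_comp adj D \<Longrightarrow> adj x d \<Longrightarrow> D = C"
  shows "2 * card {(x, y). x \<in> X' \<and> y \<in> set C \<and> goes_to V adj S x y} \<le> card X' * card (set C)"
proof -
  obtain cy where cy: "distinct cy" "set cy = set C" "3 \<le> length cy" "cyclic_walk adj cy"
    by (rule cycle_comp_obtain_cycle[OF assms(3)])
  interpret short_period_free "set C" "cycle_succ cy"
    using short_period_free_cycle_succ[OF cy(1,3)] cy(2) by simp
  have "X' \<noteq> {}" using assms(1) by auto
  then obtain pre Y suf where Y: "P = pre @ Y @ suf" "set Y = X'" "distinct Y"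
    by (rule X'_segment)
  have "length Y = card X'" using Y(2,3) distinct_card by metis
  define K where "K x = {y \<in> set C. goes_to V adj S x y}" for x
  have separated: "shift_separated (set C) (cycle_succ cy) (K (Y ! t)) (K (Y ! Suc t))"
    if "Suc t < length Y" for t
  proof -
    note no_edge = no_edge_to_cycle_successor_pair[OF P_in_S P_path_comp
        consecutive_in_segment[OF Y(1) that] assms(2,3) cy(1,4,2)]
    have "K (Y ! Suc t) \<inter> cycle_succ cy ` K (Y ! t) = {}"
      using no_edge(1) goes_to_adj[of V adj S] unfolding K_def by blast
    moreover have "K (Y ! t) \<inter> cycle_succ cy ` K (Y ! Suc t) = {}"
      using no_edge(2) goes_to_adj[of V adj S] unfolding K_def by blast
    ultimately show ?thesis unfolding shift_separated_def K_def by blast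
  qed
  have nonempty: "K x \<noteq> {}" if "x \<in> set Y" for x
  proof -
    have "\<exists>D\<in>S. cycle_comp adj D \<and> (\<exists>d\<in>set D. goes_to V adj S x d)"
      using that Y(2) X'_eq by simp
    then obtain D d where D: "D \<in> S" "cycle_comp adj D" "d \<in> set D" "goes_to V adj S x d"
      by metis
    have "D = C" using unique[OF _ D(1,3,2) goes_to_adj[OF D(4)]] that Y(2) by blast
    then show ?thesis using D unfolding K_def by blast
  qed
  have "2 * (\<Sum>y\<leftarrow>Y. card (K y)) \<le> length Y * card (set C)"
    using assms(1,4) separated nonempty \<open>length Y = card X'\<close>
    by (intro chain_bound) (simp_all add: successively_conv_nth)
  moreover have "card {(x, y). x \<in> X' \<and> y \<in> set C \<and> goes_to V adj S x y} = (\<Sum>x\<in>X'. card (K x))"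
  proof -
    have "{(x, y). x \<in> X' \<and> y \<in> set C \<and> goes_to V adj S x y} = Sigma X' K"
      unfolding K_def by auto
    moreover have "finite X'" using Y(2) by blast
    ultimately show ?thesis unfolding K_def by (simp add: card_SigmaI)
  qed
  moreover have "(\<Sum>x\<in>X'. card (K x)) = (\<Sum>y\<leftarrow>Y. card (K y))"
    using Y(2,3) by (simp add: sum_list_distinct_conv_sum_set)
  ultimately show ?thesis using \<open>length Y = card X'\<close> by simp
qed

end

theorem mainTheorem11:
  fixes V :: "'a set" and adj :: "'a \<Rightarrow> 'a \<Rightarrow> bool" and S :: "'a list set"
    and P X :: "'a list"
  assumes "simple_graph V adj" and "regular 6 V adj"
    and "canonical V adj S"
    and "P \<in> S" and "path_comp adj P"
    and "\<exists>pre suf. P = pre @ X @ suf" and "length X \<ge> 2"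
    and "set X \<subseteq> V2b V adj S"
    and "X' = {x \<in> set X. \<exists>C\<in>S. cycle_comp adj C \<and> (\<exists>y\<in>set C. goes_to V adj S x y)}"
    and "card X' \<ge> 2"
  shows "(\<exists>pre Y suf. P = pre @ Y @ suf \<and> set Y = X')
    \<and> (\<exists>C\<in>S. cycle_comp adj C
         \<and> (\<forall>x\<in>X'. \<forall>D\<in>S. \<forall>y\<in>set D. cycle_comp adj D \<and> goes_to V adj S x y \<longrightarrow> y \<in> set C)
         \<and> (card (set C) \<le> 6 \<longrightarrow>
              2 * card {(x, y). x \<in> X' \<and> y \<in> set C \<and> goes_to V adj S x y}
                \<le> card X' * card (set C)))"
proof -
  interpret canonical_segment V adj S P X X'
    by unfold_locales (fact assms)+
  have "X' \<noteq> {}" using assms(10) by auto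
  then obtain pre Y suf where "P = pre @ Y @ suf" "set Y = X'"
    by (rule X'_segment)
  moreover obtain C where C: "C \<in> S" "cycle_comp adj C"
    and unique: "\<forall>x\<in>X'. \<forall>D\<in>S. \<forall>d\<in>set D. cycle_comp adj D \<longrightarrow> adj x d \<longrightarrow> D = C"
    using X'_unique_cycle[OF assms(10)] by metis
  moreover have "\<forall>x\<in>X'. \<forall>D\<in>S. \<forall>y\<in>set D. cycle_comp adj D \<and> goes_to V adj S x y \<longrightarrow> y \<in> set C"
  proof (intro ballI impI)
    fix x D y assume "x \<in> X'" "D \<in> S" "y \<in> set D" "cycle_comp adj D \<and> goes_to V adj S x y"
    then have "D = C" using unique goes_to_adj[of V adj S x y] by blast
    then show "y \<in> set C" using \<open>y \<in> set D\<close> by simp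
  qed
  moreover have "card (set C) \<le> 6 \<Longrightarrow>
      2 * card {(x, y). x \<in> X' \<and> y \<in> set C \<and> goes_to V adj S x y} \<le> card X' * card (set C)"
    by (rule X'_balanced_edges_le[OF assms(10) C _ unique[rule_format]])
  ultimately show ?thesis using C by blast
qed

end
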